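(* Let $\varepsilon>0$ and grant (NormEq) with constant $C'$ and (Q) with parameters $r$ and $\alpha$. Then every $f\in F$ with $\|f-f^*\|_{L_2}\le r$ satisfies $\|f-f^*\|_{L_2}^2\le\frac4\alpha P\mathcal L_f$.
   Context: Setting: $F$ is a convex class of measurable functions $\mathcal X\to\mathbb R$, $\mathcal Y=\mathbb R$, $(X,Y)\sim P$, $X\sim\mu$, $\|g\|_{L_p}=(\mathbb E|g(X)|^p)^{1/p}$. For $\tau\in(0,1)$ the quantile loss is $\ell_f(x,y)=(y-f(x))(\tau-\mathbf 1\{y-f(x)\le0\})$. $f^*$ is the (unique) minimizer of $f\mapsto P\ell_f=\mathbb E\ell_f(X,Y)$ over $F$, $\mathcal L_f=\ell_f-\ell_{f^*}$, $P\mathcal L_f=\mathbb E\mathcal L_f(X,Y)$. (NormEq): there is $C'>0$ such that $\|f-f^*\|_{L_{2+\varepsilon}}\le C'\|f-f^*\|_{L_2}$ for all $f\in F$. (Q): the conditional distribution of $Y$ given $X=x$ has a density $f_{Y|X=x}$, and there exist $\alpha>0$, $r>0$ such that for all $x\in\mathcal X$ and all $z\in\mathbb R$ with $|z-f^*(x)|\le r(\sqrt2C')^{(2+\varepsilon)/\varepsilon}$, $f_{Y|X=x}(z)\ge\alpha$. *)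

theory Defs
  imports "HOL-Probability.Probability"
begin

definition qloss :: "real \<Rightarrow> ('a \<Rightarrow> real) \<Rightarrow> 'a \<times> real \<Rightarrow> real" where
  "qloss \<tau> f = (\<lambda>(x, y). (y - f x) * (\<tau> - (if y - f x \<le> 0 then 1 else 0)))"

definition Lnorm :: "'a measure \<Rightarrow> real \<Rightarrow> ('a \<Rightarrow> real) \<Rightarrow> real" where
  "Lnorm \<mu> p g = (\<integral>x. \<bar>g x\<bar> powr p \<partial>\<mu>) powr (1 / p)"

end

theory Submission
  imports Defs
begin

text \<open>Write h = f - f* and R for the risk. As f* minimises R over the convex class F,
  for every 0 < t < 1 the excess risk R f - R f* dominates the secant difference
  (R f - R f*) - (R g - R f*) / t, where g = t f + (1 - t) f*. Pointwise in y the
  corresponding secant gap of the check loss dominates a ramp supported between g(x) and f(x);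
  integrating the ramp against a conditional density that is at least alpha on the band
  |y - f*(x)| <= c gives alpha (1 - t)^2 / 2 * h(x)^2 wherever |h(x)| <= c. By (NormEq) and a
  Markov-type estimate, the part of ||h||_2^2 where |h| > c is at most ||h||_2^2 / sqrt 2^(2 + eps),
  and t is chosen so that the constants combine to alpha / 4.\<close>

definition check :: "real \<Rightarrow> real \<Rightarrow> real" where
  "check \<tau> u = u * (\<tau> - (if u \<le> 0 then 1 else 0))"

lemma qloss_eq_check: "qloss \<tau> f (x, y) = check \<tau> (y - f x)"
  by (simp add: qloss_def check_def)

lemma check_eq_max: "check \<tau> u = max (\<tau> * u) ((\<tau> - 1) * u)"
  by (auto simp: check_def max_def algebra_simps)

lemma check_convex:
  assumes "0 \<le> t" "t \<le> 1"
  shows "check \<tau> ((1 - t) * a + t * b) \<le> (1 - t) * check \<tau> a + t * check \<tau> b"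
proof -
  have "c * ((1 - t) * a + t * b) \<le> (1 - t) * check \<tau> a + t * check \<tau> b"
    if "c = \<tau> \<or> c = \<tau> - 1" for c
  proof -
    have "c * ((1 - t) * a + t * b) = (1 - t) * (c * a) + t * (c * b)"
      by (simp add: algebra_simps)
    also have "\<dots> \<le> (1 - t) * check \<tau> a + t * check \<tau> b"
      using assms that by (intro add_mono mult_left_mono) (auto simp: check_eq_max)
    finally show ?thesis .
  qed
  then show ?thesis by (auto simp: check_eq_max)
qed

text \<open>With d = y - f*(x) and k = f(x) - f*(x), ramp t k d is the linear ramp in y that
  decreases from |k| (1 - t) at y = g(x) = f*(x) + t k to 0 at y = f(x) and vanishes outside
  this segment.\<close>

definition ramp :: "real \<Rightarrow> real \<Rightarrow> real \<Rightarrow> real" where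
  "ramp t k d = (if k \<noteq> 0 \<and> t \<le> d / k \<and> d / k \<le> 1 then \<bar>k\<bar> * (1 - d / k) else 0)"

lemma borel_measurable_ramp[measurable (raw)]:
  assumes "k \<in> borel_measurable N" "d \<in> borel_measurable N"
  shows "(\<lambda>w. ramp t (k w) (d w)) \<in> borel_measurable N"
  unfolding ramp_def using assms by measurable

lemma ramp_nonneg: "0 \<le> ramp t k d"
  by (simp add: ramp_def)

lemma abs_le_if_ramp_nonzero:
  assumes "ramp t k d \<noteq> 0" "0 \<le> t"
  shows "\<bar>d\<bar> \<le> \<bar>k\<bar>"
proof -
  from assms have k: "k \<noteq> 0" and "0 \<le> d / k" "d / k \<le> 1"
    by (auto simp: ramp_def split: if_splits)
  then have "\<bar>d / k\<bar> \<le> 1" by linarith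
  have "\<bar>d\<bar> = \<bar>d / k\<bar> * \<bar>k\<bar>" using k by (simp add: abs_divide)
  also have "\<dots> \<le> 1 * \<bar>k\<bar>" using \<open>\<bar>d / k\<bar> \<le> 1\<close> by (intro mult_right_mono) auto
  finally show ?thesis by simp
qed

lemma ramp_le_check_secant_gap:
  assumes "0 < t" "t < 1"
  shows "ramp t k d \<le> (check \<tau> (d - k) - check \<tau> d) - (check \<tau> (d - t * k) - check \<tau> d) / t"
proof (cases "k \<noteq> 0 \<and> t \<le> d / k \<and> d / k \<le> 1")
  case False
  have "check \<tau> (d - t * k) \<le> (1 - t) * check \<tau> d + t * check \<tau> (d - k)"
    using check_convex[of t \<tau> d "d - k"] assms by (simp add: algebra_simps)
  moreover have "ramp t k d = 0" using False unfolding ramp_def by (rule if_not_P)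
  ultimately show ?thesis using assms by (simp add: field_simps)
next
  case True
  then consider "0 < k" "t * k \<le> d" "d \<le> k" | "k < 0" "d \<le> t * k" "k \<le> d"
    by (cases "0 < k") (auto simp: field_simps)
  then show ?thesis
  proof cases
    case 1
    with assms have "0 < d" by (smt (verit) mult_pos_pos)
    with 1 True assms show ?thesis
      by (simp add: ramp_def check_def field_simps)
  next
    case 2
    with assms have "d < 0" by (smt (verit) mult_pos_neg)
    with 2 True assms show ?thesis
      by (simp add: ramp_def check_def field_simps)
  qed
qed

lemma nn_integral_ramp:
  assumes "0 < t" "t < 1"
  shows "(\<integral>\<^sup>+y. ennreal (ramp t k (y - a)) \<partial>lborel) = ennreal ((1 - t)\<^sup>2 / 2 * k\<^sup>2)"
proof (cases "k = 0")
  case True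
  then show ?thesis by (simp add: ramp_def)
next
  case False
  have "(\<integral>\<^sup>+y. ennreal (ramp t k (y - a)) \<partial>lborel)
      = \<bar>k\<bar> * (\<integral>\<^sup>+s. ennreal (ramp t k (a + k * s - a)) \<partial>lborel)"
    using False by (intro nn_integral_real_affine) auto
  also have "(\<integral>\<^sup>+s. ennreal (ramp t k (a + k * s - a)) \<partial>lborel)
      = (\<integral>\<^sup>+s. ennreal \<bar>k\<bar> * (ennreal (1 - s) * indicator {t..1} s) \<partial>lborel)"
    using False by (intro nn_integral_cong) (auto simp: ramp_def indicator_def ennreal_mult')
  also have "\<dots> = ennreal \<bar>k\<bar> * (\<integral>\<^sup>+s. ennreal (1 - s) * indicator {t..1} s \<partial>lborel)"
    by (rule nn_integral_cmult) auto
  also have "(\<integral>\<^sup>+s. ennreal (1 - s) * indicator {t..1} s \<partial>lborel) = ennreal ((1 - t)\<^sup>2 / 2)"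
  proof -
    have "(\<integral>\<^sup>+s. ennreal (1 - s) * indicator {t..1} s \<partial>lborel)
        = ennreal ((1 - 1\<^sup>2 / 2) - (t - t\<^sup>2 / 2))"
      using assms by (intro nn_integral_FTC_Icc[where F = "\<lambda>s. s - s\<^sup>2 / 2"])
        (auto intro!: derivative_eq_intros)
    also have "(1 - 1\<^sup>2 / 2) - (t - t\<^sup>2 / 2) = (1 - t)\<^sup>2 / 2"
      by (simp add: power2_eq_square field_simps)
    finally show ?thesis .
  qed
  also have "ennreal \<bar>k\<bar> * (ennreal \<bar>k\<bar> * ennreal ((1 - t)\<^sup>2 / 2))
      = ennreal (\<bar>k\<bar> * (\<bar>k\<bar> * ((1 - t)\<^sup>2 / 2)))"
    by (simp only: ennreal_mult' abs_ge_zero)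
  also have "\<bar>k\<bar> * (\<bar>k\<bar> * ((1 - t)\<^sup>2 / 2)) = (1 - t)\<^sup>2 / 2 * k\<^sup>2"
    by (simp add: power2_eq_square)
  finally show ?thesis .
qed

lemma Lnorm_2_squared: "(Lnorm \<mu> 2 h)\<^sup>2 = (\<integral>x. (h x)\<^sup>2 \<partial>\<mu>)"
  by (simp add: Lnorm_def powr_half_sqrt)

lemma integral_abs_powr_eq_Lnorm_powr:
  assumes "0 < p"
  shows "(\<integral>x. \<bar>h x\<bar> powr p \<partial>\<mu>) = Lnorm \<mu> p h powr p"
  using assms by (simp add: Lnorm_def powr_powr)

lemma integrable_square_if_integrable_abs_powr:
  fixes h :: "'a \<Rightarrow> real"
  assumes "finite_measure \<mu>" "h \<in> borel_measurable \<mu>" "2 \<le> p"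
    and "integrable \<mu> (\<lambda>x. \<bar>h x\<bar> powr p)"
  shows "integrable \<mu> (\<lambda>x. (h x)\<^sup>2)"
proof (rule Bochner_Integration.integrable_bound)
  show "integrable \<mu> (\<lambda>x. 1 + \<bar>h x\<bar> powr p)"
    using assms(1,4) by (simp add: finite_measure.integrable_const)
  show "AE x in \<mu>. norm ((h x)\<^sup>2) \<le> norm (1 + \<bar>h x\<bar> powr p)"
  proof (intro AE_I2)
    fix x
    have "(h x)\<^sup>2 \<le> 1 + \<bar>h x\<bar> powr p"
    proof (cases "\<bar>h x\<bar> \<le> 1")
      case True
      then have "(h x)\<^sup>2 \<le> 1" using power_le_one[of "\<bar>h x\<bar>" 2] by simp
      then show ?thesis by (smt (verit) powr_ge_zero)
    next
      case False
      then have "\<bar>h x\<bar> powr 2 \<le> \<bar>h x\<bar> powr p" using assms(3) by (intro powr_mono) auto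
      then show ?thesis by simp
    qed
    then show "norm ((h x)\<^sup>2) \<le> norm (1 + \<bar>h x\<bar> powr p)" by simp
  qed
qed (use assms(2) in measurable)

lemma integral_tail_square_le:
  fixes h :: "'a \<Rightarrow> real"
  assumes "h \<in> borel_measurable \<mu>" "0 < c" "0 < \<epsilon>"
    and "integrable \<mu> (\<lambda>x. (h x)\<^sup>2)" "integrable \<mu> (\<lambda>x. \<bar>h x\<bar> powr (2 + \<epsilon>))"
  shows "(\<integral>x. (if \<bar>h x\<bar> \<le> c then 0 else (h x)\<^sup>2) \<partial>\<mu>)
           \<le> (\<integral>x. \<bar>h x\<bar> powr (2 + \<epsilon>) \<partial>\<mu>) / c powr \<epsilon>"
proof -
  have "(if \<bar>h x\<bar> \<le> c then 0 else (h x)\<^sup>2) \<le> \<bar>h x\<bar> powr (2 + \<epsilon>) / c powr \<epsilon>" for x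
  proof (cases "\<bar>h x\<bar> \<le> c")
    case False
    have "(h x)\<^sup>2 * c powr \<epsilon> \<le> (h x)\<^sup>2 * \<bar>h x\<bar> powr \<epsilon>"
      using False assms(2,3) by (intro mult_left_mono powr_mono2) auto
    also have "\<dots> = \<bar>h x\<bar> powr (2 + \<epsilon>)" by (simp add: powr_add)
    finally show ?thesis using False assms(2) by (simp add: field_simps)
  qed simp
  moreover have "integrable \<mu> (\<lambda>x. if \<bar>h x\<bar> \<le> c then 0 else (h x)\<^sup>2)"
    by (rule Bochner_Integration.integrable_bound[OF assms(4)]) (use assms(1) in auto)
  ultimately have "(\<integral>x. (if \<bar>h x\<bar> \<le> c then 0 else (h x)\<^sup>2) \<partial>\<mu>)
           \<le> (\<integral>x. \<bar>h x\<bar> powr (2 + \<epsilon>) / c powr \<epsilon> \<partial>\<mu>)"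
    using assms(5) by (intro integral_mono) auto
  then show ?thesis by simp
qed

lemma truncated_second_moment_ge:
  fixes h :: "'a \<Rightarrow> real"
  assumes "finite_measure \<mu>" "h \<in> borel_measurable \<mu>" "0 < \<epsilon>" "0 < C" "0 < r"
    and "integrable \<mu> (\<lambda>x. \<bar>h x\<bar> powr (2 + \<epsilon>))"
    and "Lnorm \<mu> (2 + \<epsilon>) h \<le> C * Lnorm \<mu> 2 h" "Lnorm \<mu> 2 h \<le> r"
  shows "(1 - 1 / sqrt 2 powr (2 + \<epsilon>)) * (Lnorm \<mu> 2 h)\<^sup>2
           \<le> (\<integral>x. (if \<bar>h x\<bar> \<le> r * (sqrt 2 * C) powr ((2 + \<epsilon>) / \<epsilon>) then (h x)\<^sup>2 else 0) \<partial>\<mu>)"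
proof -
  define L where "L = Lnorm \<mu> 2 h"
  define c where "c = r * (sqrt 2 * C) powr ((2 + \<epsilon>) / \<epsilon>)"
  define S where "S = sqrt 2 powr (2 + \<epsilon>)"
  have "0 \<le> L" "0 \<le> Lnorm \<mu> (2 + \<epsilon>) h" by (simp_all add: L_def Lnorm_def)
  have "(\<integral>x. \<bar>h x\<bar> powr (2 + \<epsilon>) \<partial>\<mu>) = Lnorm \<mu> (2 + \<epsilon>) h powr (2 + \<epsilon>)"
    using assms(3) by (intro integral_abs_powr_eq_Lnorm_powr) simp
  also have "\<dots> \<le> (C * L) powr (2 + \<epsilon>)"
    using assms(3,7) \<open>0 \<le> Lnorm \<mu> (2 + \<epsilon>) h\<close> by (intro powr_mono2) (auto simp: L_def)
  also have "\<dots> = C powr (2 + \<epsilon>) * (L\<^sup>2 * L powr \<epsilon>)"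
    using assms(4) \<open>0 \<le> L\<close> by (simp add: powr_mult powr_add)
  also have "\<dots> \<le> C powr (2 + \<epsilon>) * (L\<^sup>2 * r powr \<epsilon>)"
    using assms(3,8) \<open>0 \<le> L\<close> by (intro mult_left_mono powr_mono2) (auto simp: L_def)
  finally have moment: "(\<integral>x. \<bar>h x\<bar> powr (2 + \<epsilon>) \<partial>\<mu>) \<le> C powr (2 + \<epsilon>) * (L\<^sup>2 * r powr \<epsilon>)" .
  have "c powr \<epsilon> = r powr \<epsilon> * S * C powr (2 + \<epsilon>)"
    unfolding c_def S_def using assms(3-5) by (simp add: powr_mult powr_powr)
  have "0 < c" unfolding c_def using assms(4,5) by simp
  have int2: "integrable \<mu> (\<lambda>x. (h x)\<^sup>2)"
    using assms(1,2,3,6) by (intro integrable_square_if_integrable_abs_powr[where p = "2 + \<epsilon>"]) auto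
  have "(\<integral>x. (if \<bar>h x\<bar> \<le> c then 0 else (h x)\<^sup>2) \<partial>\<mu>)
      \<le> (\<integral>x. \<bar>h x\<bar> powr (2 + \<epsilon>) \<partial>\<mu>) / c powr \<epsilon>"
    using assms(2,3,6) \<open>0 < c\<close> int2 by (intro integral_tail_square_le)
  also have "\<dots> \<le> C powr (2 + \<epsilon>) * (L\<^sup>2 * r powr \<epsilon>) / c powr \<epsilon>"
    using moment \<open>0 < c\<close> by (simp add: divide_right_mono)
  also have "\<dots> = L\<^sup>2 / S"
    using \<open>c powr \<epsilon> = r powr \<epsilon> * S * C powr (2 + \<epsilon>)\<close> assms(4,5) by (simp add: S_def)
  finally have tail: "(\<integral>x. (if \<bar>h x\<bar> \<le> c then 0 else (h x)\<^sup>2) \<partial>\<mu>) \<le> L\<^sup>2 / S" .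
  have split: "L\<^sup>2 = (\<integral>x. (if \<bar>h x\<bar> \<le> c then (h x)\<^sup>2 else 0) \<partial>\<mu>)
             + (\<integral>x. (if \<bar>h x\<bar> \<le> c then 0 else (h x)\<^sup>2) \<partial>\<mu>)"
  proof -
    have "integrable \<mu> (\<lambda>x. if \<bar>h x\<bar> \<le> c then (h x)\<^sup>2 else 0)"
      "integrable \<mu> (\<lambda>x. if \<bar>h x\<bar> \<le> c then 0 else (h x)\<^sup>2)"
      by (rule Bochner_Integration.integrable_bound[OF int2], use assms(2) in auto)+
    then have "(\<integral>x. (if \<bar>h x\<bar> \<le> c then (h x)\<^sup>2 else 0) \<partial>\<mu>)
        + (\<integral>x. (if \<bar>h x\<bar> \<le> c then 0 else (h x)\<^sup>2) \<partial>\<mu>)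
        = (\<integral>x. (if \<bar>h x\<bar> \<le> c then (h x)\<^sup>2 else 0) + (if \<bar>h x\<bar> \<le> c then 0 else (h x)\<^sup>2) \<partial>\<mu>)"
      by (rule Bochner_Integration.integral_add[symmetric])
    also have "\<dots> = (\<integral>x. (h x)\<^sup>2 \<partial>\<mu>)"
      by (intro Bochner_Integration.integral_cong) auto
    finally show ?thesis unfolding L_def Lnorm_2_squared by simp
  qed
  have "(1 - 1 / S) * L\<^sup>2 = L\<^sup>2 - L\<^sup>2 / S" by (simp add: algebra_simps)
  with split tail show ?thesis
    unfolding L_def[symmetric] c_def[symmetric] S_def[symmetric] by linarith
qed

lemma exists_secant_parameter:
  fixes q :: real
  assumes "1 / 2 < q"
  shows "\<exists>t. 0 < t \<and> t < 1 \<and> (1 - t)\<^sup>2 * q = 1 / 2"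
proof (intro exI conjI)
  have "1 < sqrt (2 * q)" using assms by (simp add: real_less_rsqrt)
  then show "0 < 1 - 1 / sqrt (2 * q)" and "1 - 1 / sqrt (2 * q) < 1" by auto
  show "(1 - (1 - 1 / sqrt (2 * q)))\<^sup>2 * q = 1 / 2"
    using assms by (simp add: power_divide)
qed

lemma nn_integral_pair_ramp:
  fixes k a :: "'a \<Rightarrow> real"
  assumes [measurable]: "k \<in> borel_measurable \<mu>" "a \<in> borel_measurable \<mu>"
    and "0 < t" "t < 1"
  shows "(\<integral>\<^sup>+w. ennreal (ramp t (k (fst w)) (snd w - a (fst w))) \<partial>(\<mu> \<Otimes>\<^sub>M lborel))
           = (\<integral>\<^sup>+x. ennreal ((1 - t)\<^sup>2 / 2 * (k x)\<^sup>2) \<partial>\<mu>)"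
proof -
  have "(\<lambda>w. ennreal (ramp t (k (fst w)) (snd w - a (fst w)))) \<in> borel_measurable (\<mu> \<Otimes>\<^sub>M lborel)"
    by measurable
  from lborel.nn_integral_fst[OF this]
  have "(\<integral>\<^sup>+w. ennreal (ramp t (k (fst w)) (snd w - a (fst w))) \<partial>(\<mu> \<Otimes>\<^sub>M lborel))
      = (\<integral>\<^sup>+x. \<integral>\<^sup>+y. ennreal (ramp t (k x) (y - a x)) \<partial>lborel \<partial>\<mu>)"
    by simp
  also have "\<dots> = (\<integral>\<^sup>+x. ennreal ((1 - t)\<^sup>2 / 2 * (k x)\<^sup>2) \<partial>\<mu>)"
    using assms(3,4) by (intro nn_integral_cong nn_integral_ramp)
  finally show ?thesis .
qed

lemma ramp_le_qloss_secant_gap: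
  fixes f fs :: "'a \<Rightarrow> real" and t :: real
  defines "g \<equiv> \<lambda>x. t * f x + (1 - t) * fs x"
  assumes "0 < t" "t < 1"
  shows "ramp t (f x - fs x) (y - fs x)
           \<le> (qloss \<tau> f (x, y) - qloss \<tau> fs (x, y)) - (qloss \<tau> g (x, y) - qloss \<tau> fs (x, y)) / t"
proof -
  have "y - fs x - (f x - fs x) = y - f x" "y - fs x - t * (f x - fs x) = y - g x"
    by (simp_all add: g_def algebra_simps)
  then have "(qloss \<tau> f (x, y) - qloss \<tau> fs (x, y)) - (qloss \<tau> g (x, y) - qloss \<tau> fs (x, y)) / t
      = (check \<tau> (y - fs x - (f x - fs x)) - check \<tau> (y - fs x))
        - (check \<tau> (y - fs x - t * (f x - fs x)) - check \<tau> (y - fs x)) / t"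
    by (simp only: qloss_eq_check)
  then show ?thesis by (simp only: ramp_le_check_secant_gap[OF assms(2,3)])
qed

lemma nn_integral_density_ramp_le:
  fixes k a D :: "_ \<Rightarrow> real" and cd :: "'a \<Rightarrow> real \<Rightarrow> real"
  assumes P: "P = density (\<mu> \<Otimes>\<^sub>M lborel) (\<lambda>(x, z). ennreal (cd x z))"
    and [measurable]: "(\<lambda>(x, z). cd x z) \<in> borel_measurable (\<mu> \<Otimes>\<^sub>M lborel)"
    and k [measurable]: "k \<in> borel_measurable \<mu>" and a [measurable]: "a \<in> borel_measurable \<mu>"
    and [measurable]: "D \<in> borel_measurable (\<mu> \<Otimes>\<^sub>M lborel)"
    and cd_nonneg: "\<And>x z. 0 \<le> cd x z" and t: "0 < t" "t < 1" and "0 \<le> \<alpha>"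
    and weighted: "\<And>x y. x \<in> space \<mu> \<Longrightarrow> \<alpha> * ramp t (k x) (y - a x) \<le> cd x y * D (x, y)"
  shows "ennreal \<alpha> * (\<integral>\<^sup>+x. ennreal ((1 - t)\<^sup>2 / 2 * (k x)\<^sup>2) \<partial>\<mu>) \<le> (\<integral>\<^sup>+w. ennreal (D w) \<partial>P)"
proof -
  have "ennreal \<alpha> * (\<integral>\<^sup>+x. ennreal ((1 - t)\<^sup>2 / 2 * (k x)\<^sup>2) \<partial>\<mu>)
      = ennreal \<alpha> * (\<integral>\<^sup>+w. ennreal (ramp t (k (fst w)) (snd w - a (fst w))) \<partial>(\<mu> \<Otimes>\<^sub>M lborel))"
    by (simp only: nn_integral_pair_ramp[OF k a t])
  also have "\<dots> = (\<integral>\<^sup>+w. ennreal (\<alpha> * ramp t (k (fst w)) (snd w - a (fst w))) \<partial>(\<mu> \<Otimes>\<^sub>M lborel))"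
    using \<open>0 \<le> \<alpha>\<close> by (simp add: nn_integral_cmult[symmetric] ennreal_mult')
  also have "\<dots> \<le> (\<integral>\<^sup>+w. (\<lambda>(x, z). ennreal (cd x z)) w * ennreal (D w) \<partial>(\<mu> \<Otimes>\<^sub>M lborel))"
    using weighted cd_nonneg
    by (intro nn_integral_mono) (auto simp: space_pair_measure ennreal_mult'[symmetric] intro!: ennreal_leI)
  also have "\<dots> = (\<integral>\<^sup>+w. ennreal (D w) \<partial>P)"
    unfolding P by (rule nn_integral_density[symmetric]) measurable
  finally show ?thesis .
qed

lemma secant_excess_risk_ge:
  fixes f fs :: "'a \<Rightarrow> real" and cd :: "'a \<Rightarrow> real \<Rightarrow> real" and t :: real
  defines "g \<equiv> \<lambda>x. t * f x + (1 - t) * fs x"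
  assumes P: "P = density (\<mu> \<Otimes>\<^sub>M lborel) (\<lambda>(x, z). ennreal (cd x z))"
    and [measurable]: "(\<lambda>(x, z). cd x z) \<in> borel_measurable (\<mu> \<Otimes>\<^sub>M lborel)"
    and cd_nonneg: "\<And>x z. 0 \<le> cd x z"
    and [measurable]: "f \<in> borel_measurable \<mu>" "fs \<in> borel_measurable \<mu>"
    and t: "0 < t" "t < 1" and "0 \<le> \<alpha>"
    and dens: "\<And>x z. x \<in> space \<mu> \<Longrightarrow> \<bar>z - fs x\<bar> \<le> c \<Longrightarrow> \<alpha> \<le> cd x z"
    and int_f: "integrable P (qloss \<tau> f)" and int_fs: "integrable P (qloss \<tau> fs)"
    and int_g: "integrable P (qloss \<tau> g)"
    and int_sq: "integrable \<mu> (\<lambda>x. (f x - fs x)\<^sup>2)"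
  shows "\<alpha> * ((1 - t)\<^sup>2 / 2) * (\<integral>x. (if \<bar>f x - fs x\<bar> \<le> c then (f x - fs x)\<^sup>2 else 0) \<partial>\<mu>)
           \<le> ((\<integral>w. qloss \<tau> f w \<partial>P) - (\<integral>w. qloss \<tau> fs w \<partial>P))
              - ((\<integral>w. qloss \<tau> g w \<partial>P) - (\<integral>w. qloss \<tau> fs w \<partial>P)) / t"
proof -
  define k where "k x = (if \<bar>f x - fs x\<bar> \<le> c then f x - fs x else 0)" for x
  define D where "D w = (qloss \<tau> f w - qloss \<tau> fs w) - (qloss \<tau> g w - qloss \<tau> fs w) / t" for w
  have [measurable]: "k \<in> borel_measurable \<mu>" unfolding k_def by measurable
  have int_D: "integrable P D" unfolding D_def using int_f int_fs int_g by auto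
  have "borel_measurable P = borel_measurable (\<mu> \<Otimes>\<^sub>M lborel)"
    by (intro measurable_cong_sets) (simp_all add: P)
  with borel_measurable_integrable[OF int_D]
  have [measurable]: "D \<in> borel_measurable (\<mu> \<Otimes>\<^sub>M lborel)" by metis
  have D_ge: "ramp t (f x - fs x) (y - fs x) \<le> D (x, y)" for x y
    unfolding D_def g_def using t by (rule ramp_le_qloss_secant_gap)
  have D_nonneg: "0 \<le> D w" for w
    using order_trans[OF ramp_nonneg D_ge] by (metis prod.collapse)
  have "\<alpha> * ramp t (k x) (y - fs x) \<le> cd x y * D (x, y)" if "x \<in> space \<mu>" for x y
  proof (cases "ramp t (k x) (y - fs x) = 0")
    case True
    then show ?thesis using cd_nonneg D_nonneg by simp
  next
    case False
    then have "k x = f x - fs x" "\<bar>f x - fs x\<bar> \<le> c"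
      by (auto simp: k_def ramp_def split: if_splits)
    moreover have "\<bar>y - fs x\<bar> \<le> \<bar>k x\<bar>"
      using False t by (intro abs_le_if_ramp_nonzero) auto
    ultimately have "\<alpha> \<le> cd x y" using dens[OF that] by simp
    with \<open>k x = f x - fs x\<close> D_ge[of x y] \<open>0 \<le> \<alpha>\<close> show ?thesis
      by (intro mult_mono) (auto simp: ramp_nonneg)
  qed
  then have ramp_bound: "ennreal \<alpha> * (\<integral>\<^sup>+x. ennreal ((1 - t)\<^sup>2 / 2 * (k x)\<^sup>2) \<partial>\<mu>) \<le> (\<integral>\<^sup>+w. ennreal (D w) \<partial>P)"
    using P cd_nonneg t \<open>0 \<le> \<alpha>\<close> by (intro nn_integral_density_ramp_le[where cd = cd and a = fs]) auto
  have "integrable \<mu> (\<lambda>x. (k x)\<^sup>2)"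
    using int_sq by (rule Bochner_Integration.integrable_bound) (auto simp: k_def)
  then have int_k: "integrable \<mu> (\<lambda>x. (1 - t)\<^sup>2 / 2 * (k x)\<^sup>2)"
    by (rule Bochner_Integration.integrable_mult_right)
  have "(\<integral>x. (if \<bar>f x - fs x\<bar> \<le> c then (f x - fs x)\<^sup>2 else 0) \<partial>\<mu>) = (\<integral>x. (k x)\<^sup>2 \<partial>\<mu>)"
    by (intro Bochner_Integration.integral_cong) (auto simp: k_def)
  then have "ennreal (\<alpha> * ((1 - t)\<^sup>2 / 2) * (\<integral>x. (if \<bar>f x - fs x\<bar> \<le> c then (f x - fs x)\<^sup>2 else 0) \<partial>\<mu>))
      = ennreal \<alpha> * (\<integral>\<^sup>+x. ennreal ((1 - t)\<^sup>2 / 2 * (k x)\<^sup>2) \<partial>\<mu>)"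
    using int_k \<open>0 \<le> \<alpha>\<close> by (simp add: nn_integral_eq_integral ennreal_mult'[symmetric] mult.assoc)
  also note ramp_bound
  also have "(\<integral>\<^sup>+w. ennreal (D w) \<partial>P) = ennreal (\<integral>w. D w \<partial>P)"
    using int_D D_nonneg by (intro nn_integral_eq_integral) auto
  finally have "\<alpha> * ((1 - t)\<^sup>2 / 2) * (\<integral>x. (if \<bar>f x - fs x\<bar> \<le> c then (f x - fs x)\<^sup>2 else 0) \<partial>\<mu>)
      \<le> (\<integral>w. D w \<partial>P)"
    using D_nonneg by (simp only: ennreal_le_iff Bochner_Integration.integral_nonneg)
  also have "\<dots> = ((\<integral>w. qloss \<tau> f w \<partial>P) - (\<integral>w. qloss \<tau> fs w \<partial>P))
              - ((\<integral>w. qloss \<tau> g w \<partial>P) - (\<integral>w. qloss \<tau> fs w \<partial>P)) / t"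
    unfolding D_def using int_f int_fs int_g by simp
  finally show ?thesis .
qed

theorem theorem6:
  fixes M :: "'a measure" and \<mu> :: "'a measure" and P :: "('a \<times> real) measure"
    and F :: "('a \<Rightarrow> real) set" and fs :: "'a \<Rightarrow> real"
    and cd :: "'a \<Rightarrow> real \<Rightarrow> real"
    and \<tau> \<epsilon> C' r \<alpha> :: real
  assumes mu_prob: "prob_space \<mu>" and mu_sets: "sets \<mu> = sets M"
    and P_prob: "prob_space P"
    \<comment> \<open>(X,Y) ~ P, X ~ mu, and Y given X = x has density cd x\<close>
    and cd_meas: "(\<lambda>(x, z). cd x z) \<in> borel_measurable (M \<Otimes>\<^sub>M lborel)"
    and cd_nonneg: "\<And>x z. 0 \<le> cd x z"
    and P_def: "P = density (\<mu> \<Otimes>\<^sub>M lborel) (\<lambda>(x, z). ennreal (cd x z))"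
    and marginal: "distr P M fst = \<mu>"
    and tau: "0 < \<tau>" "\<tau> < 1"
    \<comment> \<open>F convex class of measurable functions\<close>
    and F_meas: "F \<subseteq> borel_measurable M"
    and F_convex: "\<And>f g t. f \<in> F \<Longrightarrow> g \<in> F \<Longrightarrow> 0 \<le> t \<Longrightarrow> t \<le> 1 \<Longrightarrow>
                      (\<lambda>x. t * f x + (1 - t) * g x) \<in> F"
    \<comment> \<open>fs minimizes the quantile risk over F\<close>
    and fs_in: "fs \<in> F"
    and risk_int: "\<And>f. f \<in> F \<Longrightarrow> integrable P (qloss \<tau> f)"
    and fs_min: "\<And>f. f \<in> F \<Longrightarrow> (\<integral>w. qloss \<tau> fs w \<partial>P) \<le> (\<integral>w. qloss \<tau> f w \<partial>P)"
    \<comment> \<open>(NormEq)\<close>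
    and eps: "0 < \<epsilon>" and Cpos: "0 < C'"
    and NormEq: "\<And>f. f \<in> F \<Longrightarrow>
          integrable \<mu> (\<lambda>x. \<bar>f x - fs x\<bar> powr (2 + \<epsilon>)) \<and>
          Lnorm \<mu> (2 + \<epsilon>) (\<lambda>x. f x - fs x) \<le> C' * Lnorm \<mu> 2 (\<lambda>x. f x - fs x)"
    \<comment> \<open>(Q)\<close>
    and alpha: "0 < \<alpha>" and rpos: "0 < r"
    and Q: "\<And>x z. x \<in> space M \<Longrightarrow>
          \<bar>z - fs x\<bar> \<le> r * (sqrt 2 * C') powr ((2 + \<epsilon>) / \<epsilon>) \<Longrightarrow> \<alpha> \<le> cd x z"
  shows "\<forall>f\<in>F. Lnorm \<mu> 2 (\<lambda>x. f x - fs x) \<le> r \<longrightarrow>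
           (Lnorm \<mu> 2 (\<lambda>x. f x - fs x))\<^sup>2
             \<le> 4 / \<alpha> * (\<integral>w. (qloss \<tau> f w - qloss \<tau> fs w) \<partial>P)"
proof (intro ballI impI)
  fix f assume "f \<in> F" and small: "Lnorm \<mu> 2 (\<lambda>x. f x - fs x) \<le> r"
  define L where "L = Lnorm \<mu> 2 (\<lambda>x. f x - fs x)"
  define S where "S = sqrt 2 powr (2 + \<epsilon>)"
  define c where "c = r * (sqrt 2 * C') powr ((2 + \<epsilon>) / \<epsilon>)"
  define head where "head = (\<integral>x. (if \<bar>f x - fs x\<bar> \<le> c then (f x - fs x)\<^sup>2 else 0) \<partial>\<mu>)"
  define R where "R u = (\<integral>w. qloss \<tau> u w \<partial>P)" for u
  interpret \<mu>: prob_space \<mu> by (rule mu_prob)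
  have "borel_measurable \<mu> = borel_measurable M" by (rule measurable_cong_sets[OF mu_sets refl])
  then have [measurable]: "f \<in> borel_measurable \<mu>" "fs \<in> borel_measurable \<mu>"
    using F_meas \<open>f \<in> F\<close> fs_in by auto
  note moment = NormEq[OF \<open>f \<in> F\<close>]
  have head_ge: "(1 - 1 / S) * L\<^sup>2 \<le> head"
    unfolding L_def S_def head_def c_def using moment small eps Cpos rpos
    by (intro truncated_second_moment_ge \<mu>.finite_measure_axioms) auto
  have "2 < S" using eps by (simp add: S_def powr_add)
  then obtain t where t: "0 < t" "t < 1" and t_eq: "(1 - t)\<^sup>2 * (1 - 1 / S) = 1 / 2"
    using exists_secant_parameter[of "1 - 1 / S"] by (auto simp: field_simps)
  define g where "g = (\<lambda>x. t * f x + (1 - t) * fs x)"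
  have "g \<in> F" unfolding g_def using F_convex[OF \<open>f \<in> F\<close> fs_in] t by simp
  have "borel_measurable (\<mu> \<Otimes>\<^sub>M lborel) = borel_measurable (M \<Otimes>\<^sub>M lborel)"
    by (intro measurable_cong_sets sets_pair_measure_cong mu_sets) simp_all
  with cd_meas have "(\<lambda>(x, z). cd x z) \<in> borel_measurable (\<mu> \<Otimes>\<^sub>M lborel)" by metis
  moreover have "integrable \<mu> (\<lambda>x. (f x - fs x)\<^sup>2)"
    using moment eps by (intro integrable_square_if_integrable_abs_powr[where p = "2 + \<epsilon>"]) auto
  ultimately have "\<alpha> * ((1 - t)\<^sup>2 / 2) * head \<le> (R f - R fs) - (R g - R fs) / t"
    unfolding head_def R_def g_def
    using P_def cd_nonneg t alpha Q risk_int[OF \<open>f \<in> F\<close>] risk_int[OF fs_in]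
      risk_int[OF \<open>g \<in> F\<close>, unfolded g_def]
    by (intro secant_excess_risk_ge[where c = c]) (auto simp: c_def sets_eq_imp_space_eq[OF mu_sets])
  also have "\<dots> \<le> R f - R fs" using fs_min[OF \<open>g \<in> F\<close>] t by (simp add: R_def)
  also have "\<dots> = (\<integral>w. (qloss \<tau> f w - qloss \<tau> fs w) \<partial>P)"
    using risk_int \<open>f \<in> F\<close> fs_in by (simp add: R_def)
  finally have "\<alpha> * ((1 - t)\<^sup>2 / 2) * head \<le> (\<integral>w. (qloss \<tau> f w - qloss \<tau> fs w) \<partial>P)" .
  moreover have "\<alpha> / 4 * L\<^sup>2 \<le> \<alpha> * ((1 - t)\<^sup>2 / 2) * head"
  proof -
    have "\<alpha> / 4 * L\<^sup>2 = \<alpha> / 2 * L\<^sup>2 * ((1 - t)\<^sup>2 * (1 - 1 / S))"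
      unfolding t_eq by simp
    also have "\<dots> = \<alpha> * ((1 - t)\<^sup>2 / 2) * ((1 - 1 / S) * L\<^sup>2)"
      by (simp add: algebra_simps)
    also have "\<dots> \<le> \<alpha> * ((1 - t)\<^sup>2 / 2) * head"
      using head_ge alpha by (intro mult_left_mono) auto
    finally show ?thesis .
  qed
  ultimately have "\<alpha> / 4 * L\<^sup>2 \<le> (\<integral>w. (qloss \<tau> f w - qloss \<tau> fs w) \<partial>P)" by linarith
  then show "L\<^sup>2 \<le> 4 / \<alpha> * (\<integral>w. (qloss \<tau> f w - qloss \<tau> fs w) \<partial>P)"
    using alpha by (simp add: field_simps)
qed

end
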